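(* Let $G$ be a nilpotent Lie group with a left-invariant almost parahermitian structure whose intrinsic torsion lies in $W_4+W_8$, i.e. the almost paracomplex structure $K$ is integrable and $dF=\theta\wedge F$ for some one-form $\theta$. If the metric is Einstein, then the structure is parak\"ahler (hence, its metric is Ricci-flat).
   Context: An almost parahermitian structure on a $2n$-manifold is a splitting $TM=V\oplus H$ into rank-$n$ distributions together with a pseudoriemannian metric $g$ such that $g(KX,KY)=-g(X,Y)$ where $K=\mathrm{id}_V-\mathrm{id}_H$; its fundamental form is $F(X,Y)=g(KX,Y)$. $K$ is integrable if $V$ and $H$ are integrable distributions. The structure is parak\"ahler if $F$ is parallel for the Levi-Civita connection of $g$. The intrinsic torsion class $W_4+W_8$ (locally conformally parak\"ahler structures) is characterized by integrability of $K$ together with $dF=\theta\wedge F$ for a one-form $\theta$. Left-invariant means $V$, $H$, $g$ are invariant under left translations. *)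

theory Defs
  imports "HOL-Analysis.Analysis"
begin

text \<open>Everything is at the level of the Lie algebra: left-invariant vector fields
of the Lie group G are identified with vectors of a finite-dimensional real
vector space 'a (euclidean_space), the Lie bracket of left-invariant fields is br.
Left-invariant tensors are multilinear maps on 'a.\<close>

definition lie_algebra :: "('a::real_vector \<Rightarrow> 'a \<Rightarrow> 'a) \<Rightarrow> bool" where
  "lie_algebra br \<longleftrightarrow> bilinear br \<and> (\<forall>x. br x x = 0) \<and>
     (\<forall>x y z. br x (br y z) + br y (br z x) + br z (br x y) = 0)"

fun lower_central :: "('a::real_vector \<Rightarrow> 'a \<Rightarrow> 'a) \<Rightarrow> nat \<Rightarrow> 'a set" where
  "lower_central br 0 = UNIV"
| "lower_central br (Suc k) = span {br x y | x y. y \<in> lower_central br k}"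

definition nilpotent_lie_algebra :: "('a::real_vector \<Rightarrow> 'a \<Rightarrow> 'a) \<Rightarrow> bool" where
  "nilpotent_lie_algebra br \<longleftrightarrow> lie_algebra br \<and> (\<exists>k. lower_central br k = {0})"

definition paraK :: "'a::real_vector set \<Rightarrow> 'a set \<Rightarrow> 'a \<Rightarrow> 'a" where
  "paraK V H x = (THE y. \<exists>v\<in>V. \<exists>h\<in>H. x = v + h \<and> y = v - h)"

definition almost_parahermitian ::
  "'a::euclidean_space set \<Rightarrow> 'a set \<Rightarrow> ('a \<Rightarrow> 'a \<Rightarrow> real) \<Rightarrow> bool" where
  "almost_parahermitian V H g \<longleftrightarrow>
     subspace V \<and> subspace H \<and> V \<inter> H = {0} \<and> (\<forall>x. \<exists>v\<in>V. \<exists>h\<in>H. x = v + h) \<and>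
     dim V = dim H \<and>
     bilinear g \<and> (\<forall>x y. g x y = g y x) \<and> (\<forall>x. (\<forall>y. g x y = 0) \<longrightarrow> x = 0) \<and>
     (\<forall>x y. g (paraK V H x) (paraK V H y) = - g x y)"

definition fundamental_form ::
  "'a::real_vector set \<Rightarrow> 'a set \<Rightarrow> ('a \<Rightarrow> 'a \<Rightarrow> real) \<Rightarrow> 'a \<Rightarrow> 'a \<Rightarrow> real" where
  "fundamental_form V H g X Y = g (paraK V H X) Y"

text \<open>Integrability of K: left-invariant distributions V, H are integrable iff subalgebras.\<close>
definition paraK_integrable :: "('a::real_vector \<Rightarrow> 'a \<Rightarrow> 'a) \<Rightarrow> 'a set \<Rightarrow> 'a set \<Rightarrow> bool" where
  "paraK_integrable br V H \<longleftrightarrow>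
     (\<forall>x\<in>V. \<forall>y\<in>V. br x y \<in> V) \<and> (\<forall>x\<in>H. \<forall>y\<in>H. br x y \<in> H)"

definition d2 :: "('a::real_vector \<Rightarrow> 'a \<Rightarrow> 'a) \<Rightarrow> ('a \<Rightarrow> 'a \<Rightarrow> real) \<Rightarrow> 'a \<Rightarrow> 'a \<Rightarrow> 'a \<Rightarrow> real" where
  "d2 br \<omega> X Y Z = - \<omega> (br X Y) Z + \<omega> (br X Z) Y - \<omega> (br Y Z) X"

definition wedge12 :: "('a::real_vector \<Rightarrow> real) \<Rightarrow> ('a \<Rightarrow> 'a \<Rightarrow> real) \<Rightarrow> 'a \<Rightarrow> 'a \<Rightarrow> 'a \<Rightarrow> real" where
  "wedge12 \<theta> \<omega> X Y Z = \<theta> X * \<omega> Y Z - \<theta> Y * \<omega> X Z + \<theta> Z * \<omega> X Y"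

definition torsion_W4_W8 ::
  "('a::euclidean_space \<Rightarrow> 'a \<Rightarrow> 'a) \<Rightarrow> 'a set \<Rightarrow> 'a set \<Rightarrow> ('a \<Rightarrow> 'a \<Rightarrow> real) \<Rightarrow> bool" where
  "torsion_W4_W8 br V H g \<longleftrightarrow> paraK_integrable br V H \<and>
     (\<exists>\<theta>. linear \<theta> \<and> (\<forall>X Y Z. d2 br (fundamental_form V H g) X Y Z
                                   = wedge12 \<theta> (fundamental_form V H g) X Y Z))"

text \<open>Levi-Civita connection on left-invariant fields (Koszul formula).\<close>
definition levi_civita :: "('a::real_vector \<Rightarrow> 'a \<Rightarrow> 'a) \<Rightarrow> ('a \<Rightarrow> 'a \<Rightarrow> real) \<Rightarrow> 'a \<Rightarrow> 'a \<Rightarrow> 'a" where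
  "levi_civita br g X Y =
     (THE W. \<forall>Z. 2 * g W Z = g (br X Y) Z - g (br Y Z) X + g (br Z X) Y)"

definition curvature :: "('a::real_vector \<Rightarrow> 'a \<Rightarrow> 'a) \<Rightarrow> ('a \<Rightarrow> 'a \<Rightarrow> real) \<Rightarrow> 'a \<Rightarrow> 'a \<Rightarrow> 'a \<Rightarrow> 'a" where
  "curvature br g X Y Z =
     levi_civita br g X (levi_civita br g Y Z) - levi_civita br g Y (levi_civita br g X Z)
     - levi_civita br g (br X Y) Z"

definition ricci :: "('a::euclidean_space \<Rightarrow> 'a \<Rightarrow> 'a) \<Rightarrow> ('a \<Rightarrow> 'a \<Rightarrow> real) \<Rightarrow> 'a \<Rightarrow> 'a \<Rightarrow> real" where
  "ricci br g Y Z = (\<Sum>b\<in>Basis. curvature br g b Y Z \<bullet> b)"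

definition einstein :: "('a::euclidean_space \<Rightarrow> 'a \<Rightarrow> 'a) \<Rightarrow> ('a \<Rightarrow> 'a \<Rightarrow> real) \<Rightarrow> bool" where
  "einstein br g \<longleftrightarrow> (\<exists>c::real. \<forall>Y Z. ricci br g Y Z = c * g Y Z)"

text \<open>Covariant derivative of F (the term X(F(Y,Z)) vanishes for left-invariant data).\<close>
definition nabla_F ::
  "('a::real_vector \<Rightarrow> 'a \<Rightarrow> 'a) \<Rightarrow> 'a set \<Rightarrow> 'a set \<Rightarrow> ('a \<Rightarrow> 'a \<Rightarrow> real) \<Rightarrow> 'a \<Rightarrow> 'a \<Rightarrow> 'a \<Rightarrow> real" where
  "nabla_F br V H g X Y Z =
     - fundamental_form V H g (levi_civita br g X Y) Z
     - fundamental_form V H g Y (levi_civita br g X Z)"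

definition parakahler ::
  "('a::real_vector \<Rightarrow> 'a \<Rightarrow> 'a) \<Rightarrow> 'a set \<Rightarrow> 'a set \<Rightarrow> ('a \<Rightarrow> 'a \<Rightarrow> real) \<Rightarrow> bool" where
  "parakahler br V H g \<longleftrightarrow> (\<forall>X Y Z. nabla_F br V H g X Y Z = 0)"

end

theory Submission
  imports Defs
begin

text \<open>Choose a basis b of the isotropic subalgebra V and the g-dual basis f b of H. By the
  Koszul formula, integrability and dF = \<theta> \<and> F determine g (nabla x y) z for x, y \<in> V
  in terms of \<theta> and the bracket, and nilpotency makes every ad y trace-free, also on the
  invariant subspaces V and H. Since V is isotropic, the Einstein condition forces Ric = 0 on
  V \<times> V; expanding Ric in the frame (b, f b) this gives \<theta> [V, V] = 0 when dim V > 2 (for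
  dim V = 2 the nilpotent algebra V is abelian anyway), and then \<theta> v = 0 for v \<in> V, since
  otherwise the vector of H dual to \<theta> on V would be an eigenvector of ad v modulo V with
  nonzero eigenvalue. By the symmetry V \<leftrightarrow> H, \<theta> = 0. Then nabla preserves V and H,
  i.e. the structure is parakahler; moreover Ric (v, h) is minus the trace of nabla [v, h] on V,
  so summing the Einstein condition over the pairs (b, f b) gives c dim V = - tr (nabla \<xi>) with
  \<xi> = \<Sum> [b, f b], which vanishes once \<theta> = 0. If dim V = 1 the Lie algebra is 2-dimensional
  nilpotent, hence abelian and flat.\<close>

definition endo_trace :: "('a::euclidean_space \<Rightarrow> 'a) \<Rightarrow> real" where
  "endo_trace M = (\<Sum>b\<in>Basis. M b \<bullet> b)"

lemma endo_trace_frame: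
  fixes M :: "'a::euclidean_space \<Rightarrow> 'a"
  assumes I: "finite I" and M: "linear M" and \<phi>: "\<And>i. i \<in> I \<Longrightarrow> linear (\<phi> i)"
    and expand: "\<And>x. x = (\<Sum>i\<in>I. \<phi> i x *\<^sub>R e i)"
  shows "endo_trace M = (\<Sum>i\<in>I. \<phi> i (M (e i)))"
proof -
  have "endo_trace M = (\<Sum>b\<in>Basis. (\<Sum>i\<in>I. \<phi> i (M b) *\<^sub>R e i) \<bullet> b)"
    unfolding endo_trace_def by (subst expand) simp
  also have "\<dots> = (\<Sum>i\<in>I. \<Sum>b\<in>Basis. \<phi> i (M b) * (e i \<bullet> b))"
    by (simp add: inner_sum_left sum.swap[of _ Basis])
  also have "\<dots> = (\<Sum>i\<in>I. \<phi> i (M (\<Sum>b\<in>Basis. (e i \<bullet> b) *\<^sub>R b)))"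
  proof (rule sum.cong[OF refl])
    fix i assume "i \<in> I"
    then have L: "linear (\<lambda>x. \<phi> i (M x))"
      using linear_compose[OF M \<phi>] by (simp add: o_def)
    show "(\<Sum>b\<in>Basis. \<phi> i (M b) * (e i \<bullet> b))
        = \<phi> i (M (\<Sum>b\<in>Basis. (e i \<bullet> b) *\<^sub>R b))"
      by (simp add: linear_sum[OF L] linear_cmul[OF L] mult.commute)
  qed
  also have "\<dots> = (\<Sum>i\<in>I. \<phi> i (M (e i)))"
    by (simp add: euclidean_representation)
  finally show ?thesis .
qed

lemma pairwise_orthogonal_expansion:
  fixes W :: "'a::euclidean_space set"
  assumes W: "finite W" "pairwise orthogonal W" "span W = UNIV"
  shows "x = (\<Sum>u\<in>W. ((x \<bullet> u) / (u \<bullet> u)) *\<^sub>R u)"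
proof -
  define z where "z = x - (\<Sum>u\<in>W. ((x \<bullet> u) / (u \<bullet> u)) *\<^sub>R u)"
  have z_orth_W: "z \<bullet> u = 0" if u: "u \<in> W" for u
  proof -
    have "(\<Sum>u'\<in>W. ((x \<bullet> u') / (u' \<bullet> u')) *\<^sub>R u') \<bullet> u
        = (\<Sum>u'\<in>W. ((x \<bullet> u') / (u' \<bullet> u')) * (u' \<bullet> u))"
      by (simp add: inner_sum_left)
    also have "\<dots> = ((x \<bullet> u) / (u \<bullet> u)) * (u \<bullet> u)"
      using W(2) u by (subst sum.remove[OF W(1) u])
        (auto intro!: sum.neutral simp: pairwise_def orthogonal_def inner_commute)
    also have "\<dots> = x \<bullet> u" by (cases "u = 0") auto
    finally show ?thesis by (simp add: z_def inner_diff_left)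
  qed
  have "z \<bullet> y = 0" if "y \<in> span W" for y
    using that
  proof (induction rule: span_induct)
    case base show ?case by (auto simp: subspace_def inner_add_right)
  next
    case (step x) then show ?case using z_orth_W by simp
  qed
  then have "z \<bullet> z = 0" using W(3) by auto
  then show ?thesis by (simp add: z_def)
qed

lemma nilpotent_image_eq_imp_trivial:
  assumes nil: "\<And>x. (N ^^ k) x = 0" and image: "N ` S = S"
  shows "S \<subseteq> {0}"
proof -
  have "(N ^^ j) ` S = S" for j
  proof (induction j)
    case (Suc j)
    have "(N ^^ Suc j) ` S = N ` ((N ^^ j) ` S)" by (simp add: image_image)
    then show ?case using Suc image by simp
  qed simp
  then have "S = (N ^^ k) ` S" by simp
  also have "\<dots> \<subseteq> {0}" using nil by auto
  finally show ?thesis .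
qed

text \<open>An orthogonal basis adapted to the flag S \<supseteq> N S \<supseteq> N (N S) \<supseteq> \<dots>:
  each new basis vector is orthogonal to the image of N.\<close>
lemma nilpotent_orthogonal_basis:
  fixes N :: "'a::euclidean_space \<Rightarrow> 'a"
  assumes N: "linear N" and nil: "\<And>x. (N ^^ k) x = 0"
  shows "subspace S \<Longrightarrow> N ` S \<subseteq> S \<Longrightarrow>
    \<exists>W. pairwise orthogonal W \<and> span W = S \<and> (\<forall>u\<in>W. N u \<bullet> u = 0)"
proof (induction "dim S" arbitrary: S rule: less_induct)
  case less
  show ?case
  proof (cases "N ` S = S")
    case True
    then have "S = {0}"
      using nilpotent_image_eq_imp_trivial[OF nil] subspace_0[OF less.prems(1)] by blast
    then show ?thesis by (intro exI[of _ "{}"]) auto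
  next
    case False
    have sub: "subspace (N ` S)" by (rule linear_subspace_image[OF N less.prems(1)])
    have "span (N ` S) = N ` S" "span S = S"
      using sub less.prems(1) by (simp_all only: span_eq_iff)
    moreover have "N ` S \<subset> S" using False less.prems(2) by auto
    ultimately have "span (N ` S) \<subset> span S" by (simp del: span_eq_iff)
    then have "dim (N ` S) < dim S" by (rule dim_psubset)
    moreover have "N ` (N ` S) \<subseteq> N ` S" using less.prems(2) by auto
    ultimately obtain W'
      where W': "pairwise orthogonal W'" "span W' = N ` S" "\<forall>u\<in>W'. N u \<bullet> u = 0"
      using less.hyps sub by blast
    obtain U where U: "U \<inter> insert 0 W' = {}" "pairwise orthogonal (W' \<union> U)"
      "span (W' \<union> U) = span (W' \<union> S)"
      using orthogonal_extension_strong[OF W'(1)] by blast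
    have "W' \<union> S = S" using W'(2) less.prems(2) span_superset by blast
    then have span: "span (W' \<union> U) = S"
      using U(3) span_eq_iff[THEN iffD2, OF less.prems(1)] by (simp only:)
    have "N u \<bullet> u = 0" if u: "u \<in> U" for u
    proof -
      have "u \<in> S" using u span span_superset[of "W' \<union> U"] by blast
      then have "N u \<in> span W'" using W'(2) by blast
      moreover have "orthogonal u y" if y: "y \<in> W'" for y
      proof -
        have "u \<noteq> y" using U(1) u y by blast
        then show ?thesis using U(2) u y unfolding pairwise_def by blast
      qed
      ultimately have "orthogonal u (N u)" by (rule orthogonal_to_span)
      then show ?thesis by (simp add: orthogonal_def inner_commute)
    qed
    then show ?thesis using W' U(2) span by (intro exI[of _ "W' \<union> U"]) auto
  qed
qed

lemma endo_trace_nilpotent: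
  fixes N :: "'a::euclidean_space \<Rightarrow> 'a"
  assumes N: "linear N" and nil: "\<And>x. (N ^^ k) x = 0"
  shows "endo_trace N = 0"
proof -
  obtain W where W: "pairwise orthogonal W" "span W = UNIV" "\<forall>u\<in>W. N u \<bullet> u = 0"
    using nilpotent_orthogonal_basis[OF N nil, of UNIV] by auto
  have fin: "finite W" using pairwise_orthogonal_imp_finite[OF W(1)] .
  have lin: "linear (\<lambda>x. (x \<bullet> u) / (u \<bullet> u))" for u :: 'a
    by (intro linearI) (auto simp: inner_add_left add_divide_distrib)
  have "endo_trace N = (\<Sum>u\<in>W. (N u \<bullet> u) / (u \<bullet> u))"
    by (rule endo_trace_frame[OF fin N lin, where e = "\<lambda>u. u"])
      (rule pairwise_orthogonal_expansion[OF fin W(1,2)])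
  also have "\<dots> = 0" using W(3) by simp
  finally show ?thesis .
qed

lemma ricci_eq_endo_trace: "ricci br g Y Z = endo_trace (\<lambda>X. curvature br g X Y Z)"
  by (simp add: ricci_def endo_trace_def)

locale lie_alg =
  fixes br :: "'a::euclidean_space \<Rightarrow> 'a \<Rightarrow> 'a"
  assumes lie_algebra: "lie_algebra br"
begin

lemma br_bilinear: "bilinear br" and br_self: "br x x = 0"
  and jacobi: "br x (br y z) + br y (br z x) + br z (br x y) = 0"
  using lie_algebra unfolding lie_algebra_def by auto

lemmas br_simps = bilinear_ladd[OF br_bilinear] bilinear_radd[OF br_bilinear]
  bilinear_lmul[OF br_bilinear] bilinear_rmul[OF br_bilinear]
  bilinear_lsub[OF br_bilinear] bilinear_rsub[OF br_bilinear]
  bilinear_lneg[OF br_bilinear] bilinear_rneg[OF br_bilinear]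
  bilinear_lzero[OF br_bilinear] bilinear_rzero[OF br_bilinear]

lemma linear_br_right: "linear (br x)" and linear_br_left: "linear (\<lambda>y. br y x)"
  using br_bilinear unfolding bilinear_def by auto

lemma br_sum_left: "br (sum f S) y = (\<Sum>x\<in>S. br (f x) y)"
  using linear_sum[OF linear_br_left] by simp

lemma br_sum_right: "br y (sum f S) = (\<Sum>x\<in>S. br y (f x))"
  using linear_sum[OF linear_br_right] by simp

lemma br_antisym: "br y x = - br x y"
proof -
  have "0 = br (x + y) (x + y)" using br_self by simp
  also have "\<dots> = br x y + br y x" by (simp only: br_simps) (simp add: br_self)
  finally have "br x y + br y x = 0" by (rule sym)
  then show ?thesis by (simp only: add_eq_0_iff)
qed

end

locale nilpotent_lie_alg = lie_alg +
  assumes lower_central_vanishes: "\<exists>k. lower_central br k = {0}"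
begin

lemma ad_pow_lower_central: "((br y) ^^ j) x \<in> lower_central br j"
  by (induction j) (auto intro!: span_base)

lemma ad_nilpotent: "\<exists>k. \<forall>y x. ((br y) ^^ k) x = 0"
  using lower_central_vanishes ad_pow_lower_central by blast

lemma endo_trace_ad: "endo_trace (br y) = 0"
proof -
  obtain k where "\<And>y x. ((br y) ^^ k) x = 0" using ad_nilpotent by blast
  then show ?thesis by (intro endo_trace_nilpotent[OF linear_br_right])
qed

text \<open>The powers of ad x act on [x, y] by scaling with d, so nilpotency forces d = 0.\<close>
lemma br_in_span_imp_coeff_zero:
  assumes br_xy: "br x y = a *\<^sub>R x + d *\<^sub>R y"
  shows "d = 0 \<or> br x y = 0"
proof -
  have pow: "((br x) ^^ Suc j) y = d ^ j *\<^sub>R (a *\<^sub>R x + d *\<^sub>R y)" for j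
  proof (induction j)
    case 0 then show ?case using br_xy by simp
  next
    case (Suc j)
    have "((br x) ^^ Suc (Suc j)) y = br x (((br x) ^^ Suc j) y)" by simp
    also have "\<dots> = d ^ j *\<^sub>R (a *\<^sub>R br x x + d *\<^sub>R br x y)"
      unfolding Suc by (simp add: br_simps)
    also have "\<dots> = d ^ Suc j *\<^sub>R (a *\<^sub>R x + d *\<^sub>R y)" by (simp add: br_self br_xy)
    finally show ?case .
  qed
  obtain k where k: "\<And>y x. ((br y) ^^ k) x = 0" using ad_nilpotent by blast
  have "((br x) ^^ Suc k) y = 0" using k by (simp add: br_simps)
  then have "d ^ k *\<^sub>R (a *\<^sub>R x + d *\<^sub>R y) = 0" using pow[of k] by simp
  then show ?thesis using br_xy by auto
qed

lemma br_in_span_imp_zero: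
  assumes br_xy: "br x y = a *\<^sub>R x + d *\<^sub>R y"
  shows "br x y = 0"
proof (cases "d = 0")
  case True
  then have "br y x = 0 *\<^sub>R y + (- a) *\<^sub>R x" using br_xy br_antisym[of y x] by simp
  then have "- a = 0 \<or> br y x = 0" by (rule br_in_span_imp_coeff_zero)
  then show ?thesis using br_xy True br_antisym[of y x] by auto
next
  case False then show ?thesis using br_in_span_imp_coeff_zero[OF br_xy] by simp
qed

end

locale metric_lie_alg = lie_alg br for br :: "'a::euclidean_space \<Rightarrow> 'a \<Rightarrow> 'a" +
  fixes g :: "'a::euclidean_space \<Rightarrow> 'a \<Rightarrow> real"
  assumes g_bilinear: "bilinear g" and g_sym: "g x y = g y x"
    and g_nondegenerate: "(\<And>y. g x y = 0) \<Longrightarrow> x = 0"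
begin

lemmas g_simps = bilinear_ladd[OF g_bilinear] bilinear_radd[OF g_bilinear]
  bilinear_lmul[OF g_bilinear] bilinear_rmul[OF g_bilinear]
  bilinear_lsub[OF g_bilinear] bilinear_rsub[OF g_bilinear]
  bilinear_lneg[OF g_bilinear] bilinear_rneg[OF g_bilinear]
  bilinear_lzero[OF g_bilinear] bilinear_rzero[OF g_bilinear]

lemma linear_g_right: "linear (g x)" and linear_g_left: "linear (\<lambda>y. g y x)"
  using g_bilinear unfolding bilinear_def by auto

lemma g_sum_left: "g (sum f S) y = (\<Sum>x\<in>S. g (f x) y)"
  using linear_sum[OF linear_g_left] by simp

lemma g_sum_right: "g y (sum f S) = (\<Sum>x\<in>S. g y (f x))"
  using linear_sum[OF linear_g_right] by simp

lemma g_represents: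
  assumes \<phi>: "linear \<phi>"
  obtains w where "\<And>z. g w z = \<phi> z"
proof -
  define G where "G x = (\<Sum>b\<in>Basis. g x b *\<^sub>R b)" for x
  have linG: "linear G" unfolding G_def
    by (intro linearI) (simp_all add: g_simps scaleR_add_left sum.distrib scaleR_sum_right)
  have g_expand: "g x y = (\<Sum>b\<in>Basis. (y \<bullet> b) * g x b)" for x y
  proof -
    have "g x y = g x (\<Sum>b\<in>Basis. (y \<bullet> b) *\<^sub>R b)" by (simp add: euclidean_representation)
    then show ?thesis by (simp add: g_sum_right g_simps)
  qed
  have G_inner: "G x \<bullet> b = g x b" if "b \<in> Basis" for x b
    using that by (simp add: G_def inner_sum_left inner_Basis if_distrib cong: if_cong)
  have "inj G"
  proof (subst linear_inj_iff_eq_0[OF linG], intro allI impI)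
    fix x assume "G x = 0"
    then have "g x b = 0" if "b \<in> Basis" for b using G_inner[OF that, of x] by simp
    then have "g x y = 0" for y by (subst g_expand) simp
    then show "x = 0" by (rule g_nondegenerate)
  qed
  then have "surj G" by (rule linear_injective_imp_surjective[OF linG]) simp
  then obtain w where w: "G w = (\<Sum>b\<in>Basis. \<phi> b *\<^sub>R b)" by (metis surjD)
  have w_Basis: "g w b = \<phi> b" if "b \<in> Basis" for b
    using G_inner[OF that, of w] that by (simp add: w inner_sum_left inner_Basis if_distrib cong: if_cong)
  have "g w z = \<phi> z" for z
  proof -
    have "\<phi> z = \<phi> (\<Sum>b\<in>Basis. (z \<bullet> b) *\<^sub>R b)" by (simp add: euclidean_representation)
    also have "\<dots> = (\<Sum>b\<in>Basis. (z \<bullet> b) * \<phi> b)"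
      by (simp add: linear_sum[OF \<phi>] linear_cmul[OF \<phi>])
    finally show ?thesis by (subst g_expand) (simp add: w_Basis)
  qed
  then show ?thesis by (rule that)
qed

abbreviation nabla where "nabla X Y \<equiv> levi_civita br g X Y"
abbreviation Rm where "Rm X Y Z \<equiv> curvature br g X Y Z"

lemma koszul_unique:
  assumes "\<And>Z. 2 * g W Z = g (br X Y) Z - g (br Y Z) X + g (br Z X) Y"
    and "\<And>Z. 2 * g W' Z = g (br X Y) Z - g (br Y Z) X + g (br Z X) Y"
  shows "W = W'"
proof -
  have "g (W - W') Z = 0" for Z using assms[of Z] by (simp add: g_simps)
  then show ?thesis using g_nondegenerate by fastforce
qed

lemma koszul: "2 * g (nabla X Y) Z = g (br X Y) Z - g (br Y Z) X + g (br Z X) Y"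
proof -
  have lin: "linear (\<lambda>Z. (g (br X Y) Z - g (br Y Z) X + g (br Z X) Y) / 2)"
    by (intro linearI) (simp_all add: g_simps br_simps add_divide_distrib diff_divide_distrib algebra_simps)
  obtain w where w_half: "\<And>Z. g w Z = (g (br X Y) Z - g (br Y Z) X + g (br Z X) Y) / 2"
    using g_represents[OF lin] by blast
  have w: "\<And>Z. 2 * g w Z = g (br X Y) Z - g (br Y Z) X + g (br Z X) Y" by (simp add: w_half)
  have "nabla X Y = w"
    unfolding levi_civita_def using w koszul_unique[OF _ w] by (intro the_equality) blast+
  then show ?thesis using w by simp
qed

lemma levi_civita_eqI:
  "(\<And>Z. 2 * g W Z = g (br X Y) Z - g (br Y Z) X + g (br Z X) Y) \<Longrightarrow> nabla X Y = W"
  using koszul_unique[OF koszul] by blast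

lemma bilinear_nabla: "bilinear nabla"
proof -
  note koszul_expand = g_simps real_scaleR_def distrib_left mult.left_commute[of 2] koszul
  have add_left: "nabla (X + X') Y = nabla X Y + nabla X' Y" for X X' Y
    by (rule levi_civita_eqI) (simp only: koszul_expand, simp add: g_simps br_simps algebra_simps)
  have scale_left: "nabla (a *\<^sub>R X) Y = a *\<^sub>R nabla X Y" for a X Y
    by (rule levi_civita_eqI) (simp only: koszul_expand, simp add: g_simps br_simps algebra_simps)
  have add_right: "nabla X (Y + Y') = nabla X Y + nabla X Y'" for X Y Y'
    by (rule levi_civita_eqI) (simp only: koszul_expand, simp add: g_simps br_simps algebra_simps)
  have scale_right: "nabla X (a *\<^sub>R Y) = a *\<^sub>R nabla X Y" for a X Y
    by (rule levi_civita_eqI) (simp only: koszul_expand, simp add: g_simps br_simps algebra_simps)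
  show ?thesis unfolding bilinear_def
    by (auto intro!: linearI simp: add_left scale_left add_right scale_right)
qed

lemmas nabla_simps = bilinear_ladd[OF bilinear_nabla] bilinear_radd[OF bilinear_nabla]
  bilinear_lmul[OF bilinear_nabla] bilinear_rmul[OF bilinear_nabla]
  bilinear_lsub[OF bilinear_nabla] bilinear_rsub[OF bilinear_nabla]
  bilinear_lneg[OF bilinear_nabla] bilinear_rneg[OF bilinear_nabla]
  bilinear_lzero[OF bilinear_nabla] bilinear_rzero[OF bilinear_nabla]

lemma linear_nabla_left: "linear (\<lambda>X. nabla X Y)" and linear_nabla_right: "linear (nabla X)"
  using bilinear_nabla unfolding bilinear_def by auto

lemma nabla_sum_left: "nabla (sum f S) Y = (\<Sum>x\<in>S. nabla (f x) Y)"
  using linear_sum[OF linear_nabla_left] by simp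

lemma nabla_metric: "g (nabla X A) B + g A (nabla X B) = 0"
proof -
  have "2 * g (nabla X A) B + 2 * g (nabla X B) A = 0"
    unfolding koszul by (simp add: br_antisym[of A X] br_antisym[of B A] br_antisym[of X B] g_simps)
  then show ?thesis using g_sym[of A "nabla X B"] by simp
qed

lemma nabla_torsion_free: "nabla X Y - nabla Y X = br X Y"
proof -
  have "g (nabla X Y - nabla Y X - br X Y) Z = 0" for Z
  proof -
    have "2 * g (nabla X Y) Z - 2 * g (nabla Y X) Z - 2 * g (br X Y) Z = 0"
      unfolding koszul by (simp add: br_antisym[of Y X] br_antisym[of X Z] br_antisym[of Z Y] g_simps)
    then show ?thesis by (simp add: g_simps)
  qed
  then show ?thesis using g_nondegenerate by (metis eq_iff_diff_eq_0)
qed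

lemma g_curvature:
  "g (Rm X Y Z) W = - g (nabla Y Z) (nabla X W) + g (nabla X Z) (nabla Y W) - g (nabla (br X Y) Z) W"
  using nabla_metric[of X "nabla Y Z" W] nabla_metric[of Y "nabla X Z" W]
  unfolding curvature_def by (simp add: g_simps)

lemma linear_curvature_left: "linear (\<lambda>X. Rm X Y Z)"
  unfolding curvature_def by (intro linearI) (simp_all add: nabla_simps br_simps algebra_simps)

lemma curvature_skew: "g (Rm X Y A) B = - g A (Rm X Y B)"
proof -
  have "g (Rm X Y A) B + g (Rm X Y B) A = 0"
    unfolding g_curvature using nabla_metric[of "br X Y" A B] g_sym[of "nabla Y A" "nabla X B"]
      g_sym[of "nabla X A" "nabla Y B"] g_sym[of A "nabla (br X Y) B"] by simp
  then show ?thesis using g_sym[of A "Rm X Y B"] by simp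
qed

lemma first_bianchi: "Rm X Y Z + Rm Y Z X + Rm Z X Y = 0"
proof -
  have "Rm X Y Z + Rm Y Z X + Rm Z X Y =
     nabla X (nabla Y Z - nabla Z Y) + nabla Y (nabla Z X - nabla X Z) + nabla Z (nabla X Y - nabla Y X)
     - nabla (br X Y) Z - nabla (br Y Z) X - nabla (br Z X) Y"
    unfolding curvature_def by (simp add: nabla_simps algebra_simps)
  also have "\<dots> = (nabla X (br Y Z) - nabla (br Y Z) X) + (nabla Y (br Z X) - nabla (br Z X) Y)
      + (nabla Z (br X Y) - nabla (br X Y) Z)"
    unfolding nabla_torsion_free[of Y Z] nabla_torsion_free[of Z X] nabla_torsion_free[of X Y]
    by (simp add: algebra_simps)
  also have "\<dots> = br X (br Y Z) + br Y (br Z X) + br Z (br X Y)" by (simp only: nabla_torsion_free)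
  also have "\<dots> = 0" by (rule jacobi)
  finally show ?thesis .
qed

lemma nabla_abelian: "(\<And>x y. br x y = 0) \<Longrightarrow> nabla X Y = 0"
  by (rule levi_civita_eqI) (simp add: g_simps)

lemma ricci_abelian: "(\<And>x y. br x y = 0) \<Longrightarrow> ricci br g Y Z = 0"
  unfolding ricci_def curvature_def by (simp add: nabla_abelian)

end

lemma paraK_add:
  assumes "subspace V" "subspace H" "V \<inter> H = {0}" "v \<in> V" "h \<in> H"
  shows "paraK V H (v + h) = v - h"
  unfolding paraK_def
proof (rule the_equality)
  show "\<exists>v'\<in>V. \<exists>h'\<in>H. v + h = v' + h' \<and> v - h = v' - h'" using assms by blast
  fix y assume "\<exists>v'\<in>V. \<exists>h'\<in>H. v + h = v' + h' \<and> y = v' - h'"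
  then obtain v' h' where a: "v' \<in> V" "h' \<in> H" "v + h = v' + h'" "y = v' - h'" by blast
  have "v - v' = h' - h" using a(3) by (simp add: algebra_simps)
  moreover have "v - v' \<in> V" "h' - h \<in> H" using a assms by (simp_all add: subspace_diff)
  ultimately have "v - v' = 0" using assms(3) by (metis IntI singletonD)
  then show "y = v - h" using a by (simp add: algebra_simps)
qed

context
  fixes V H :: "'a::euclidean_space set" and g :: "'a \<Rightarrow> 'a \<Rightarrow> real"
  assumes aph: "almost_parahermitian V H g"
begin

lemma paraK_aph: "v \<in> V \<Longrightarrow> h \<in> H \<Longrightarrow> paraK V H (v + h) = v - h"
  using aph paraK_add unfolding almost_parahermitian_def by blast

lemma paraK_V_aph: "v \<in> V \<Longrightarrow> paraK V H v = v"
  using aph paraK_aph[of v 0] unfolding almost_parahermitian_def by (simp add: subspace_0)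

lemma paraK_H_aph: "h \<in> H \<Longrightarrow> paraK V H h = - h"
  using aph paraK_aph[of 0 h] unfolding almost_parahermitian_def by (simp add: subspace_0)

lemma g_paraK_aph: "g (paraK V H x) (paraK V H y) = - g x y"
  using aph unfolding almost_parahermitian_def by blast

lemma isotropic_V_aph: "v \<in> V \<Longrightarrow> w \<in> V \<Longrightarrow> g v w = 0"
  using g_paraK_aph[of v w] by (simp add: paraK_V_aph)

lemma isotropic_H_aph: "v \<in> H \<Longrightarrow> w \<in> H \<Longrightarrow> g v w = 0"
  using g_paraK_aph[of v w] aph unfolding almost_parahermitian_def
  by (simp add: paraK_H_aph bilinear_lneg bilinear_rneg)

lemma g_bilinear_aph: "bilinear g"
  using aph unfolding almost_parahermitian_def by blast

lemma decompose_aph: obtains p q where "p \<in> V" "q \<in> H" "x = p + q"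
  using aph unfolding almost_parahermitian_def by blast

lemma fundamental_form_V_plus_H_aph:
  assumes "p \<in> V" "q \<in> H"
  shows "fundamental_form V H g (p + q) w = g p w - g q w"
  unfolding fundamental_form_def paraK_aph[OF assms] by (simp add: bilinear_lsub[OF g_bilinear_aph])

lemma fundamental_form_V_aph:
  assumes w: "w \<in> V"
  shows "fundamental_form V H g x w = - g x w"
proof -
  obtain p q where pq: "p \<in> V" "q \<in> H" "x = p + q" by (rule decompose_aph)
  then show ?thesis using fundamental_form_V_plus_H_aph[OF pq(1,2)] isotropic_V_aph[OF pq(1) w]
    by (simp add: bilinear_ladd[OF g_bilinear_aph])
qed

lemma fundamental_form_H_aph:
  assumes h: "h \<in> H"
  shows "fundamental_form V H g x h = g x h"
proof -
  obtain p q where pq: "p \<in> V" "q \<in> H" "x = p + q" by (rule decompose_aph)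
  then show ?thesis using fundamental_form_V_plus_H_aph[OF pq(1,2)] isotropic_H_aph[OF pq(2) h]
    by (simp add: bilinear_ladd[OF g_bilinear_aph])
qed

end

lemma independent_coeff_unique:
  fixes B :: "'a::real_vector set"
  assumes "finite B" "independent B" "(\<Sum>c\<in>B. u c *\<^sub>R c) = (\<Sum>c\<in>B. w c *\<^sub>R c)" "b \<in> B"
  shows "u b = w b"
proof -
  have "(\<Sum>c\<in>B. (u c - w c) *\<^sub>R c) = 0" using assms(3) by (simp add: scaleR_diff_left sum_subtractf)
  then show ?thesis using assms(1,2,4) dependent_finite[OF assms(1)] by (metis right_minus_eq)
qed

lemma endo_trace_nilpotent_on_range:
  fixes N P :: "'a::euclidean_space \<Rightarrow> 'a"
  assumes "linear N" "linear P"
    and P_range: "\<And>x. P x \<in> S" and P_id: "\<And>s. s \<in> S \<Longrightarrow> P s = s"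
    and N_S: "\<And>s. s \<in> S \<Longrightarrow> N s \<in> S" and nil: "\<And>x. (N ^^ k) x = 0"
  shows "endo_trace (\<lambda>x. N (P x)) = 0"
proof -
  have N_pow_S: "(N ^^ j) s \<in> S" if "s \<in> S" for s j
    using that N_S by (induction j) auto
  have "((\<lambda>x. N (P x)) ^^ Suc j) x = (N ^^ Suc j) (P x)" for j x
  proof (induction j)
    case (Suc j)
    have "((\<lambda>x. N (P x)) ^^ Suc (Suc j)) x = N (P (((\<lambda>x. N (P x)) ^^ Suc j) x))" by simp
    also have "\<dots> = N (P ((N ^^ Suc j) (P x)))" unfolding Suc ..
    also have "\<dots> = (N ^^ Suc (Suc j)) (P x)" by (subst P_id[OF N_pow_S[OF P_range]]) simp_all
    finally show ?case .
  qed simp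
  then have "((\<lambda>x. N (P x)) ^^ Suc k) x = 0" for x using nil by (simp add: linear_0[OF assms(1)])
  moreover have "linear (\<lambda>x. N (P x))" using linear_compose[OF assms(2,1)] by (simp add: o_def)
  ultimately show ?thesis by (intro endo_trace_nilpotent)
qed

text \<open>The last two assumptions are dF = \<theta> \<and> F evaluated on V \<times> V \<times> H and on H \<times> H \<times> V,
  using F x w = - g x w for w \<in> V and F x h = g x h for h \<in> H.\<close>
locale W4_W8_alg = metric_lie_alg br g for br :: "'a::euclidean_space \<Rightarrow> 'a \<Rightarrow> 'a" and g +
  fixes V H :: "'a set" and \<theta> :: "'a \<Rightarrow> real"
  assumes subspace_V: "subspace V" and subspace_H: "subspace H" and V_inter_H: "V \<inter> H = {0}"
    and V_plus_H: "\<And>x. \<exists>v\<in>V. \<exists>h\<in>H. x = v + h"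
    and dim_V_eq_dim_H: "dim V = dim H"
    and isotropic_V: "\<And>v w. v \<in> V \<Longrightarrow> w \<in> V \<Longrightarrow> g v w = 0"
    and isotropic_H: "\<And>v w. v \<in> H \<Longrightarrow> w \<in> H \<Longrightarrow> g v w = 0"
    and subalgebra_V: "\<And>v w. v \<in> V \<Longrightarrow> w \<in> V \<Longrightarrow> br v w \<in> V"
    and subalgebra_H: "\<And>v w. v \<in> H \<Longrightarrow> w \<in> H \<Longrightarrow> br v w \<in> H"
    and linear_theta: "linear \<theta>"
    and dF_VVH: "\<And>v w h. v \<in> V \<Longrightarrow> w \<in> V \<Longrightarrow> h \<in> H \<Longrightarrow>
        - g (br v w) h - g (br v h) w + g (br w h) v = \<theta> v * g w h - \<theta> w * g v h"
    and dF_HHV: "\<And>v w h. v \<in> H \<Longrightarrow> w \<in> H \<Longrightarrow> h \<in> V \<Longrightarrow>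
        - g (br v w) h - g (br v h) w + g (br w h) v = \<theta> v * g w h - \<theta> w * g v h"
begin

lemma swap: "W4_W8_alg br g H V \<theta>"
proof -
  have "\<exists>h\<in>H. \<exists>v\<in>V. x = h + v" for x using V_plus_H[of x] by (metis add.commute)
  then show ?thesis
    using metric_lie_alg_axioms subspace_V subspace_H V_inter_H dim_V_eq_dim_H isotropic_V isotropic_H
      subalgebra_V subalgebra_H linear_theta dF_VVH dF_HHV
    by (simp add: W4_W8_alg_def W4_W8_alg_axioms_def Int_commute)
qed

lemmas theta_simps = linear_add[OF linear_theta] linear_diff[OF linear_theta]
  linear_cmul[OF linear_theta] linear_neg[OF linear_theta] linear_0[OF linear_theta]

lemma decompose: obtains v h where "v \<in> V" "h \<in> H" "x = v + h"
  using V_plus_H[of x] by blast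

lemma paraK_V_plus_H: "v \<in> V \<Longrightarrow> h \<in> H \<Longrightarrow> paraK V H (v + h) = v - h"
  using paraK_add[OF subspace_V subspace_H V_inter_H] .

lemma mem_V_if_orthogonal_V:
  assumes orth: "\<And>w. w \<in> V \<Longrightarrow> g x w = 0"
  shows "x \<in> V"
proof -
  obtain v h where vh: "v \<in> V" "h \<in> H" "x = v + h" by (rule decompose)
  have "g h y = 0" for y
  proof -
    obtain v' h' where "v' \<in> V" "h' \<in> H" "y = v' + h'" by (rule decompose)
    moreover have "g h v' = 0" using orth[OF \<open>v' \<in> V\<close>] isotropic_V[OF vh(1) \<open>v' \<in> V\<close>] vh(3)
      by (simp add: g_simps)
    moreover have "g h h' = 0" using isotropic_H vh(2) \<open>h' \<in> H\<close> by blast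
    ultimately show ?thesis by (simp add: g_simps)
  qed
  then have "h = 0" by (rule g_nondegenerate)
  then show "x \<in> V" using vh by simp
qed

lemma koszul_VVH:
  assumes "x \<in> V" "y \<in> V" "k \<in> H"
  shows "g (nabla x y) k = g (br k x) y - \<theta> x * g y k / 2 + \<theta> y * g x k / 2"
  using koszul[of x y k] dF_VVH[OF assms] br_antisym[of x k] by (simp add: g_simps)

lemma koszul_VVV: "x \<in> V \<Longrightarrow> y \<in> V \<Longrightarrow> y' \<in> V \<Longrightarrow> g (nabla x y) y' = 0"
  using koszul[of x y y'] isotropic_V subalgebra_V by simp

lemma nabla_V_V: "x \<in> V \<Longrightarrow> y \<in> V \<Longrightarrow> nabla x y \<in> V"
  using koszul_VVV mem_V_if_orthogonal_V by blast

lemma koszul_HVV: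
  assumes "k \<in> H" "w \<in> V" "x \<in> V"
  shows "g (nabla k w) x = \<theta> w * g k x / 2 - g w k * \<theta> x / 2"
  using koszul[of k w x] dF_VVH[OF assms(2,3,1)] br_antisym[of k w] g_sym[of x k]
  by (simp add: g_simps algebra_simps)

lemma koszul_XVV:
  assumes "w \<in> V" "x \<in> V"
  shows "g (nabla X w) x = \<theta> w * g X x / 2 - g w X * \<theta> x / 2"
proof -
  obtain v h where vh: "v \<in> V" "h \<in> H" "X = v + h" by (rule decompose)
  have "g (nabla X w) x = g (nabla v w) x + g (nabla h w) x" by (simp add: vh nabla_simps g_simps)
  also have "\<dots> = \<theta> w * g h x / 2 - g w h * \<theta> x / 2"
    using koszul_VVV[OF vh(1) assms] koszul_HVV[OF vh(2) assms] by simp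
  also have "\<dots> = \<theta> w * g X x / 2 - g w X * \<theta> x / 2"
    using isotropic_V[OF vh(1) assms(2)] isotropic_V[OF assms(1) vh(1)] by (simp add: vh g_simps)
  finally show ?thesis .
qed

context
  assumes theta_zero: "\<And>x. \<theta> x = 0"
begin

lemma nabla_preserves_V: "y \<in> V \<Longrightarrow> nabla X y \<in> V"
  using koszul_XVV theta_zero mem_V_if_orthogonal_V by simp

lemma nabla_preserves_H: "y \<in> H \<Longrightarrow> nabla X y \<in> H"
  using W4_W8_alg.nabla_preserves_V[OF swap] theta_zero by blast

lemma curvature_preserves_V: "Z \<in> V \<Longrightarrow> Rm X Y Z \<in> V"
  unfolding curvature_def using nabla_preserves_V subspace_V by (simp add: subspace_diff)

lemma curvature_preserves_H: "Z \<in> H \<Longrightarrow> Rm X Y Z \<in> H"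
  unfolding curvature_def using nabla_preserves_H subspace_H by (simp add: subspace_diff)

lemma paraK_nabla: "paraK V H (nabla X Y) = nabla X (paraK V H Y)"
proof -
  obtain v h where vh: "v \<in> V" "h \<in> H" "Y = v + h" by (rule decompose)
  have "paraK V H (nabla X Y) = paraK V H (nabla X v + nabla X h)" by (simp add: vh nabla_simps)
  also have "\<dots> = nabla X v - nabla X h"
    by (rule paraK_V_plus_H[OF nabla_preserves_V[OF vh(1)] nabla_preserves_H[OF vh(2)]])
  also have "\<dots> = nabla X (paraK V H Y)" by (simp add: vh paraK_V_plus_H nabla_simps)
  finally show ?thesis .
qed

lemma parakahler_if_theta_zero: "parakahler br V H g"
proof -
  have "nabla_F br V H g X Y Z = 0" for X Y Z
    unfolding nabla_F_def fundamental_form_def paraK_nabla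
    using nabla_metric[of X "paraK V H Y" Z] by simp
  then show ?thesis unfolding parakahler_def by blast
qed

end

end

locale nilpotent_W4_W8_alg = W4_W8_alg br g V H \<theta> + nilpotent_lie_alg br
  for br :: "'a::euclidean_space \<Rightarrow> 'a \<Rightarrow> 'a" and g V H \<theta>
begin

lemma ad_eigenvalue_mod_V:
  assumes z: "z \<in> H" and v: "v \<in> V" and e: "br v z - l *\<^sub>R z \<in> V"
  shows "l = 0 \<or> z = 0"
proof -
  have p: "((br v) ^^ j) z - l ^ j *\<^sub>R z \<in> V" for j
  proof (induction j)
    case 0 then show ?case using subspace_0[OF subspace_V] by simp
  next
    case (Suc j)
    define p where "p = ((br v) ^^ j) z - l ^ j *\<^sub>R z"
    define q where "q = br v z - l *\<^sub>R z"
    have "((br v) ^^ Suc j) z - l ^ Suc j *\<^sub>R z = br v (p + l ^ j *\<^sub>R z) - l ^ Suc j *\<^sub>R z"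
      by (simp add: p_def)
    also have "\<dots> = br v p + l ^ j *\<^sub>R q" by (simp add: q_def br_simps algebra_simps)
    finally show ?case using Suc[folded p_def] e[folded q_def] subalgebra_V[OF v] subspace_V
      by (simp add: subspace_add subspace_scale)
  qed
  obtain k where k: "\<forall>y x. ((br y) ^^ k) x = 0" using ad_nilpotent by blast
  have "- (l ^ k *\<^sub>R z) \<in> V" using p[of k] k by simp
  then have "l ^ k *\<^sub>R z \<in> V" using subspace_V subspace_neg by fastforce
  moreover have "l ^ k *\<^sub>R z \<in> H" using z subspace_H subspace_scale by blast
  ultimately have "l ^ k *\<^sub>R z = 0" using V_inter_H by blast
  then show ?thesis by auto
qed


end

locale dual_frame = W4_W8_alg br g V H \<theta>
  for br :: "'a::euclidean_space \<Rightarrow> 'a \<Rightarrow> 'a" and g V H \<theta> +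
  fixes B :: "'a set" and f :: "'a \<Rightarrow> 'a"
  assumes finite_B: "finite B" and B_V: "B \<subseteq> V" and card_B: "card B = dim V"
    and f_H: "\<And>b. b \<in> B \<Longrightarrow> f b \<in> H"
    and dual: "\<And>b c. b \<in> B \<Longrightarrow> c \<in> B \<Longrightarrow> g c (f b) = (if c = b then 1 else 0)"
    and expand_V: "\<And>x. x \<in> V \<Longrightarrow> x = (\<Sum>b\<in>B. g x (f b) *\<^sub>R b)"

context W4_W8_alg
begin

lemma H_orthogonal_V_zero: "y \<in> H \<Longrightarrow> (\<And>v. v \<in> V \<Longrightarrow> g y v = 0) \<Longrightarrow> y = 0"
  using mem_V_if_orthogonal_V V_inter_H by blast

lemma dual_vector_exists:
  assumes B: "independent B" "span B = V" and b: "b \<in> B"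
  obtains y where "y \<in> H" "\<forall>c\<in>B. g c y = (if c = b then 1 else 0)"
proof -
  have fin: "finite B" using B(1) independent_imp_finite by blast
  define \<Phi> where "\<Phi> y = (\<Sum>c\<in>B. g y c *\<^sub>R c)" for y
  have lin: "linear \<Phi>" unfolding \<Phi>_def
    by (intro linearI) (simp_all add: g_simps scaleR_add_left sum.distrib scaleR_sum_right)
  have coeff: "g y c = a c" if "\<Phi> y = (\<Sum>c\<in>B. a c *\<^sub>R c)" "c \<in> B" for y a c
    using independent_coeff_unique[OF fin B(1), of "g y" a c] that by (simp add: \<Phi>_def)
  have "inj_on \<Phi> H"
  proof (subst linear_inj_on_iff_eq_0[OF lin subspace_H], intro ballI impI)
    fix y assume y: "y \<in> H" "\<Phi> y = 0"
    have "g y v = 0" if v: "v \<in> V" for v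
    proof -
      obtain a where "v = (\<Sum>c\<in>B. a c *\<^sub>R c)" using v B(2) span_finite[OF fin] by auto
      moreover have "g y c = 0" if "c \<in> B" for c using coeff[of y "\<lambda>_. 0" c] y(2) that by simp
      ultimately show ?thesis by (simp add: g_sum_right g_simps)
    qed
    then show "y = 0" using H_orthogonal_V_zero y(1) by blast
  qed
  then have "dim (\<Phi> ` H) = dim V"
    using dim_image_eq[OF lin, of H] span_eq_iff[THEN iffD2, OF subspace_H] dim_V_eq_dim_H by simp
  moreover have "\<Phi> ` H \<subseteq> V"
    unfolding \<Phi>_def using B(2) subspace_V span_superset
    by (auto intro!: subspace_sum subspace_scale)
  ultimately have "\<Phi> ` H = V"
    using subspace_dim_equal[OF linear_subspace_image[OF lin subspace_H] subspace_V] by simp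
  moreover have "b \<in> V" using b B(2) span_superset by blast
  ultimately obtain y where y: "y \<in> H" "\<Phi> y = b" by blast
  have "b = (\<Sum>c\<in>B. (if c = b then 1 else 0) *\<^sub>R c)"
    by (subst sum.remove[OF fin b]) (auto intro!: sum.neutral[symmetric])
  then have "g y c = (if c = b then 1 else 0)" if "c \<in> B" for c
    using coeff[of y "\<lambda>c. if c = b then 1 else 0" c] y(2) that by simp
  then have "\<forall>c\<in>B. g c y = (if c = b then 1 else 0)" using g_sym by metis
  with y(1) show thesis by (rule that)
qed

lemma dual_frame_exists:
  obtains B f where "dual_frame br g V H \<theta> B f"
proof -
  obtain B where B: "B \<subseteq> V" "independent B" "V \<subseteq> span B" "card B = dim V"
    using basis_exists[of V] by blast
  have fin: "finite B" using B(2) independent_imp_finite by blast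
  have span: "span B = V" using B(1,3) subspace_V span_minimal[of B V] by auto
  have "\<exists>y. y \<in> H \<and> (\<forall>c\<in>B. g c y = (if c = b then 1 else 0))" if b: "b \<in> B" for b
    using dual_vector_exists[OF B(2) span b] by blast
  then obtain f
    where f: "\<And>b. b \<in> B \<Longrightarrow> f b \<in> H \<and> (\<forall>c\<in>B. g c (f b) = (if c = b then 1 else 0))"
    by metis
  have "x = (\<Sum>b\<in>B. g x (f b) *\<^sub>R b)" if x: "x \<in> V" for x
  proof -
    obtain a where a: "x = (\<Sum>c\<in>B. a c *\<^sub>R c)" using x span span_finite[OF fin] by auto
    have "g x (f b) = a b" if "b \<in> B" for b
    proof -
      have "g x (f b) = (\<Sum>c\<in>B. a c * (if c = b then 1 else 0))"
        unfolding a using f that by (simp add: g_sum_left g_simps)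
      also have "\<dots> = a b" using fin that by (simp add: if_distrib cong: if_cong)
      finally show ?thesis .
    qed
    then show ?thesis using a by simp
  qed
  then show thesis
    using W4_W8_alg_axioms fin B(1,4) f
    by (intro that[of B f]) (simp add: dual_frame_def dual_frame_axioms_def)
qed

end

context dual_frame
begin

lemma dual_sym: "b \<in> B \<Longrightarrow> c \<in> B \<Longrightarrow> g (f b) c = (if c = b then 1 else 0)"
  using dual g_sym by metis

lemma frame_V: "b \<in> B \<Longrightarrow> b \<in> V" using B_V by auto

lemma sum_delta: "c \<in> B \<Longrightarrow> (\<Sum>b\<in>B. (if c = b then 1 else 0) * (u b :: real)) = u c"
  by (subst sum.remove[OF finite_B, of c]) (auto intro!: sum.neutral split: if_splits)

lemma expand_H: "y \<in> H \<Longrightarrow> y = (\<Sum>b\<in>B. g y b *\<^sub>R f b)"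
proof -
  assume y: "y \<in> H"
  define z where "z = y - (\<Sum>b\<in>B. g y b *\<^sub>R f b)"
  have zH: "z \<in> H" unfolding z_def using y f_H subspace_H
    by (auto intro!: subspace_diff subspace_sum subspace_scale)
  have zc: "g z c = 0" if "c \<in> B" for c
  proof -
    have "g z c = g y c - (\<Sum>b\<in>B. g y b * (if c = b then 1 else 0))"
      unfolding z_def using dual_sym[OF _ that] by (simp add: g_simps g_sum_left)
    also have "\<dots> = 0" using sum_delta[OF that, of "g y"] by (simp add: mult.commute)
    finally show ?thesis .
  qed
  have "g z w = 0" if "w \<in> V" for w
  proof -
    have "g z w = g z (\<Sum>c\<in>B. g w (f c) *\<^sub>R c)" using expand_V[OF that] by simp
    also have "\<dots> = 0" by (simp add: g_sum_right g_simps zc)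
    finally show ?thesis .
  qed
  then have "z \<in> V" by (rule mem_V_if_orthogonal_V)
  then have "z = 0" using zH V_inter_H by blast
  then show ?thesis by (simp add: z_def)
qed

lemma expand: "x = (\<Sum>b\<in>B. g x (f b) *\<^sub>R b) + (\<Sum>b\<in>B. g x b *\<^sub>R f b)"
proof -
  obtain v h where vh: "v \<in> V" "h \<in> H" "x = v + h" by (rule decompose)
  have "(\<Sum>b\<in>B. g x (f b) *\<^sub>R b) = (\<Sum>b\<in>B. g v (f b) *\<^sub>R b)"
    using isotropic_H[OF vh(2) f_H] by (simp add: vh g_simps)
  moreover have "(\<Sum>b\<in>B. g x b *\<^sub>R f b) = (\<Sum>b\<in>B. g h b *\<^sub>R f b)"
    using isotropic_V[OF vh(1) frame_V] by (simp add: vh g_simps)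
  ultimately show ?thesis using expand_V[OF vh(1)] expand_H[OF vh(2)] vh(3) by simp
qed

lemma g_expand_V_left: "x \<in> V \<Longrightarrow> g x y = (\<Sum>b\<in>B. g x (f b) * g b y)"
proof -
  assume "x \<in> V"
  then have "g x y = g (\<Sum>b\<in>B. g x (f b) *\<^sub>R b) y" using expand_V by simp
  then show ?thesis by (simp add: g_sum_left g_simps)
qed

lemma g_expand_V_right: "x \<in> V \<Longrightarrow> g y x = (\<Sum>b\<in>B. g x (f b) * g y b)"
proof -
  assume a: "x \<in> V"
  have "g y x = g x y" by (rule g_sym)
  also have "\<dots> = (\<Sum>b\<in>B. g x (f b) * g b y)" by (rule g_expand_V_left[OF a])
  also have "\<dots> = (\<Sum>b\<in>B. g x (f b) * g y b)" by (rule sum.cong[OF refl]) (simp add: g_sym[of _ y])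
  finally show ?thesis .
qed

lemma endo_trace_dual_frame:
  "linear M \<Longrightarrow> endo_trace M = (\<Sum>b\<in>B. g (M b) (f b) + g (M (f b)) b)"
proof -
  assume M: "linear M"
  define \<phi> where "\<phi> p x = (if snd p then g x (f (fst p)) else g x (fst p))"
    for p :: "'a \<times> bool" and x
  define e where "e p = (if snd p then fst p else f (fst p))" for p :: "'a \<times> bool"
  have fin: "finite (B \<times> (UNIV :: bool set))" using finite_B by simp
  have lin: "linear (\<phi> p)" for p unfolding \<phi>_def
    by (cases "snd p") (auto intro!: linearI simp: g_simps)
  have split: "(\<Sum>p\<in>B \<times> (UNIV :: bool set). F p) = (\<Sum>b\<in>B. F (b, True) + F (b, False))"
    for F :: "'a \<times> bool \<Rightarrow> 'c::comm_monoid_add"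
    by (subst sum.cartesian_product') (simp add: UNIV_bool add.commute)
  have ex: "x = (\<Sum>p\<in>B \<times> (UNIV :: bool set). \<phi> p x *\<^sub>R e p)" for x
    unfolding split using expand[of x] by (simp add: \<phi>_def e_def sum.distrib)
  have "endo_trace M = (\<Sum>p\<in>B \<times> (UNIV :: bool set). \<phi> p (M (e p)))"
    by (rule endo_trace_frame[OF fin M lin ex])
  also have "\<dots> = (\<Sum>b\<in>B. g (M b) (f b) + g (M (f b)) b)"
    unfolding split by (simp add: \<phi>_def e_def)
  finally show ?thesis .
qed

lemma ricci_dual_frame: "ricci br g Y Z = (\<Sum>b\<in>B. g (Rm b Y Z) (f b) + g (Rm (f b) Y Z) b)"
  unfolding ricci_eq_endo_trace by (rule endo_trace_dual_frame[OF linear_curvature_left])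

lemma sum_g_frame_dual: "(\<Sum>b\<in>B. g b (f b)) = real (card B)"
  using dual by simp

definition projV where "projV x = (\<Sum>b\<in>B. g x (f b) *\<^sub>R b)"
definition projH where "projH x = (\<Sum>b\<in>B. g x b *\<^sub>R f b)"

lemma linear_projV: "linear projV" unfolding projV_def
  by (intro linearI) (simp_all add: g_simps scaleR_add_left sum.distrib scaleR_sum_right)
lemma linear_projH: "linear projH" unfolding projH_def
  by (intro linearI) (simp_all add: g_simps scaleR_add_left sum.distrib scaleR_sum_right)
lemma projV_V: "projV x \<in> V"
  unfolding projV_def using frame_V subspace_V by (auto intro!: subspace_sum subspace_scale)
lemma projH_H: "projH x \<in> H"
  unfolding projH_def using f_H subspace_H by (auto intro!: subspace_sum subspace_scale)
lemma projV_id: "x \<in> V \<Longrightarrow> projV x = x" unfolding projV_def using expand_V by simp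
lemma projH_id: "x \<in> H \<Longrightarrow> projH x = x" unfolding projH_def using expand_H by simp
lemma projV_H: "x \<in> H \<Longrightarrow> projV x = 0" unfolding projV_def using isotropic_H f_H by simp
lemma projH_V: "x \<in> V \<Longrightarrow> projH x = 0" unfolding projH_def using isotropic_V frame_V by simp

end

locale nilpotent_dual_frame = nilpotent_W4_W8_alg br g V H \<theta> + dual_frame br g V H \<theta> B f
  for br :: "'a::euclidean_space \<Rightarrow> 'a \<Rightarrow> 'a" and g V H \<theta> B f
begin

lemma trace_ad_frame: "(\<Sum>b\<in>B. g (br u b) (f b) + g (br u (f b)) b) = 0"
  using endo_trace_ad[of u] endo_trace_dual_frame[OF linear_br_right[of u]] by simp

lemma trace_ad_V: "y \<in> V \<Longrightarrow> (\<Sum>b\<in>B. g (br y b) (f b)) = 0"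
proof -
  assume y: "y \<in> V"
  obtain k where "\<And>x. ((br y) ^^ k) x = 0" using ad_nilpotent by blast
  then have "endo_trace (\<lambda>x. br y (projV x)) = 0"
    using subalgebra_V[OF y] projV_V projV_id
    by (intro endo_trace_nilpotent_on_range[where S=V, OF linear_br_right linear_projV]) auto
  then show ?thesis
    using endo_trace_dual_frame[of "\<lambda>x. br y (projV x)"] linear_compose[OF linear_projV linear_br_right]
    by (simp add: o_def projV_id[OF frame_V] projV_H[OF f_H] br_simps g_simps)
qed

lemma trace_ad_V_dual: "y \<in> V \<Longrightarrow> (\<Sum>b\<in>B. g (br y (f b)) b) = 0"
  using trace_ad_frame[of y] trace_ad_V by (simp add: sum.distrib)

lemma trace_ad_H: "y \<in> H \<Longrightarrow> (\<Sum>b\<in>B. g (br y (f b)) b) = 0"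
proof -
  assume y: "y \<in> H"
  obtain k where "\<And>x. ((br y) ^^ k) x = 0" using ad_nilpotent by blast
  then have "endo_trace (\<lambda>x. br y (projH x)) = 0"
    using subalgebra_H[OF y] projH_H projH_id
    by (intro endo_trace_nilpotent_on_range[where S=H, OF linear_br_right linear_projH]) auto
  then show ?thesis
    using endo_trace_dual_frame[of "\<lambda>x. br y (projH x)"] linear_compose[OF linear_projH linear_br_right]
    by (simp add: o_def projH_id[OF f_H] projH_V[OF frame_V] br_simps g_simps)
qed

lemma trace_ad_H_dual: "y \<in> H \<Longrightarrow> (\<Sum>b\<in>B. g (br y b) (f b)) = 0"
  using trace_ad_frame[of y] trace_ad_H by (simp add: sum.distrib)

lemma sum_g_br_frame_V_dual: "v \<in> V \<Longrightarrow> (\<Sum>b\<in>B. g (br b v) (f b)) = 0"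
  using trace_ad_V br_antisym[of _ v] by (simp add: g_simps sum_negf)

lemma sum_g_br_dual_V_frame: "v \<in> V \<Longrightarrow> (\<Sum>b\<in>B. g (br (f b) v) b) = 0"
  using trace_ad_V_dual br_antisym[of "f _" v] by (simp add: g_simps sum_negf)

definition \<xi> where "\<xi> = (\<Sum>b\<in>B. br b (f b))"
definition \<zeta> where "\<zeta> = (\<Sum>b\<in>B. \<theta> b *\<^sub>R f b)"
abbreviation m where "m \<equiv> real (card B)"

lemma zeta_H: "\<zeta> \<in> H"
  unfolding \<zeta>_def using f_H subspace_H by (auto intro!: subspace_sum subspace_scale)

lemma linear_expand_V:
  assumes "linear F" "w \<in> V"
  shows "(\<Sum>b\<in>B. g w (f b) *\<^sub>R F b) = F w"
proof -
  have "F w = F (\<Sum>b\<in>B. g w (f b) *\<^sub>R b)" using expand_V[OF assms(2)] by simp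
  then show ?thesis by (simp add: linear_sum[OF assms(1)] linear_scale[OF assms(1)])
qed

lemma g_V_zeta: "x \<in> V \<Longrightarrow> g x \<zeta> = \<theta> x"
  using linear_expand_V[OF linear_theta]
  unfolding \<zeta>_def by (simp add: g_sum_right g_simps mult.commute)

lemma g_zeta_V: "x \<in> V \<Longrightarrow> g \<zeta> x = \<theta> x"
  using g_V_zeta g_sym by metis

lemma sum_g_nabla_frame_pairs: "(\<Sum>b\<in>B. g u (nabla b (f b)) + g u (nabla (f b) b)) = 0"
proof -
  have "g u (nabla b (f b)) + g u (nabla (f b) b) = g (br u b) (f b) + g (br u (f b)) b" for b
  proof -
    have "2 * g (nabla b (f b)) u + 2 * g (nabla (f b) b) u
        = 2 * g (br u b) (f b) + 2 * g (br u (f b)) b"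
      unfolding koszul using br_antisym[of "f b" b] br_antisym[of "f b" u] br_antisym[of b u]
      by (simp add: g_simps)
    then show ?thesis using g_sym[of u "nabla b (f b)"] g_sym[of u "nabla (f b) b"] by simp
  qed
  then show ?thesis using trace_ad_frame by simp
qed

lemma sum_g_nabla_frame_dual:
  assumes w: "w \<in> V"
  shows "(\<Sum>b\<in>B. g (nabla b w) (f b)) = - g \<xi> w - \<theta> w / 2 + m * \<theta> w / 2"
proof -
  have "(\<Sum>b\<in>B. g (nabla b w) (f b))
      = (\<Sum>b\<in>B. g (br (f b) b) w - \<theta> b * g w (f b) / 2 + \<theta> w * g b (f b) / 2)"
    using koszul_VVH[OF frame_V w f_H] by simp
  also have "\<dots> = (\<Sum>b\<in>B. g (br (f b) b) w) - (\<Sum>b\<in>B. g w (f b) * \<theta> b) / 2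
      + \<theta> w * (\<Sum>b\<in>B. g b (f b)) / 2"
    by (simp add: sum.distrib sum_subtractf sum_divide_distrib sum_distrib_left mult.commute)
  also have "(\<Sum>b\<in>B. g (br (f b) b) w) = - g \<xi> w"
    unfolding \<xi>_def using br_antisym[of "f _" "_"] by (simp add: g_sum_left g_simps sum_negf)
  also have "(\<Sum>b\<in>B. g w (f b) * \<theta> b) = \<theta> w" using linear_expand_V[OF linear_theta w] by simp
  also have "(\<Sum>b\<in>B. g b (f b)) = m" by (rule sum_g_frame_dual)
  finally show ?thesis by (simp add: algebra_simps)
qed

context
  fixes v w assumes v: "v \<in> V" and w: "w \<in> V"
begin

lemma theta_nabla_VV: "\<theta> (nabla v w) = g (br \<zeta> v) w"
  using g_V_zeta[OF nabla_V_V[OF v w]] koszul_VVH[OF v w zeta_H] g_V_zeta[OF v] g_V_zeta[OF w]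
  by simp

lemma sum_g_nabla_frame_nabla_dual:
  "(\<Sum>b\<in>B. g (nabla b w) (nabla v (f b))) = - (\<Sum>b\<in>B. g (br (f b) v) (nabla b w))
     + \<theta> v / 2 * (\<Sum>b\<in>B. g (nabla b w) (f b)) - \<theta> (nabla v w) / 2"
proof -
  have e: "g (nabla b w) (nabla v (f b)) = - g (br (f b) v) (nabla b w)
      + \<theta> v * g (nabla b w) (f b) / 2 - \<theta> (nabla b w) * g v (f b) / 2" if b: "b \<in> B" for b
    using nabla_metric[of v "nabla b w" "f b"] koszul_VVH[OF v nabla_V_V[OF frame_V[OF b] w] f_H[OF b]]
    by simp
  have "(\<Sum>b\<in>B. g (nabla b w) (nabla v (f b))) = - (\<Sum>b\<in>B. g (br (f b) v) (nabla b w))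
      + \<theta> v / 2 * (\<Sum>b\<in>B. g (nabla b w) (f b)) - (\<Sum>b\<in>B. \<theta> (nabla b w) * g v (f b)) / 2"
    by (simp add: e sum.distrib sum_subtractf sum_negf sum_divide_distrib sum_distrib_left
        algebra_simps)
  also have "(\<Sum>b\<in>B. \<theta> (nabla b w) * g v (f b)) = \<theta> (nabla v w)"
    using linear_expand_V[OF linear_compose[OF linear_nabla_left linear_theta] v, of w]
    by (simp add: o_def mult.commute)
  finally show ?thesis .
qed

lemma sum_g_br_dual_nabla_frame:
  "(\<Sum>b\<in>B. g (br (f b) v) (nabla b w))
     = (\<Sum>b\<in>B. \<Sum>c\<in>B. g (br (f b) v) c * g (br (f c) b) w) - g (br \<zeta> v) w / 2"
proof -
  have e: "g (br (f b) v) (nabla b w) = (\<Sum>c\<in>B. g (br (f b) v) c * g (br (f c) b) w)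
      - \<theta> b * g (br (f b) v) w / 2 + \<theta> w * g (br (f b) v) b / 2" if b: "b \<in> B" for b
  proof -
    have "g (br (f b) v) (nabla b w) = (\<Sum>c\<in>B. g (nabla b w) (f c) * g (br (f b) v) c)"
      by (rule g_expand_V_right[OF nabla_V_V[OF frame_V[OF b] w]])
    also have "\<dots> = (\<Sum>c\<in>B. (g (br (f c) b) w - \<theta> b * g w (f c) / 2 + \<theta> w * g b (f c) / 2)
        * g (br (f b) v) c)"
      using koszul_VVH[OF frame_V[OF b] w f_H] by simp
    also have "\<dots> = (\<Sum>c\<in>B. g (br (f b) v) c * g (br (f c) b) w)
        - \<theta> b * (\<Sum>c\<in>B. g w (f c) * g (br (f b) v) c) / 2
        + \<theta> w * (\<Sum>c\<in>B. g b (f c) * g (br (f b) v) c) / 2"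
      by (simp add: sum.distrib sum_subtractf sum_divide_distrib sum_distrib_left algebra_simps)
    also have "(\<Sum>c\<in>B. g w (f c) * g (br (f b) v) c) = g (br (f b) v) w"
      using g_expand_V_right[OF w] by simp
    also have "(\<Sum>c\<in>B. g b (f c) * g (br (f b) v) c) = g (br (f b) v) b"
      using g_expand_V_right[OF frame_V[OF b]] by simp
    finally show ?thesis .
  qed
  have "(\<Sum>b\<in>B. \<theta> b * g (br (f b) v) w) = g (br \<zeta> v) w"
    unfolding \<zeta>_def by (simp add: br_sum_left g_sum_left br_simps g_simps)
  then show ?thesis
    using sum_g_br_dual_V_frame[OF v]
    by (simp add: e sum.distrib sum_subtractf sum_divide_distrib[symmetric]
        sum_distrib_left[symmetric])
qed

lemma sum_g_nabla_dual_nabla_frame: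
  "(\<Sum>b\<in>B. g (nabla (f b) w) (nabla v b))
     = \<theta> w / 2 * (\<theta> v / 2 - m * \<theta> v / 2) - \<theta> (nabla v w) / 2"
proof -
  have e: "g (nabla (f b) w) (nabla v b)
      = \<theta> w * g (nabla v b) (f b) / 2 - g w (f b) * \<theta> (nabla v b) / 2" if b: "b \<in> B" for b
    using koszul_XVV[OF w nabla_V_V[OF v frame_V[OF b]], of "f b"] g_sym[of "f b" "nabla v b"] by simp
  have "(\<Sum>b\<in>B. g (nabla v b) (f b))
      = (\<Sum>b\<in>B. g (br (f b) v) b - \<theta> v * g b (f b) / 2 + \<theta> b * g v (f b) / 2)"
    using koszul_VVH[OF v frame_V f_H] by simp
  also have "\<dots> = (\<Sum>b\<in>B. g (br (f b) v) b) - \<theta> v * (\<Sum>b\<in>B. g b (f b)) / 2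
      + (\<Sum>b\<in>B. g v (f b) * \<theta> b) / 2"
    by (simp add: sum.distrib sum_subtractf sum_divide_distrib sum_distrib_left algebra_simps)
  finally have trace: "(\<Sum>b\<in>B. g (nabla v b) (f b)) = \<theta> v / 2 - m * \<theta> v / 2"
    using sum_g_br_dual_V_frame[OF v] linear_expand_V[OF linear_theta v] sum_g_frame_dual
    by (simp add: algebra_simps)
  have "(\<Sum>b\<in>B. g (nabla (f b) w) (nabla v b))
      = \<theta> w * (\<Sum>b\<in>B. g (nabla v b) (f b)) / 2 - (\<Sum>b\<in>B. g w (f b) * \<theta> (nabla v b)) / 2"
    by (simp add: e sum_subtractf sum_divide_distrib sum_distrib_left)
  also have "(\<Sum>b\<in>B. g w (f b) * \<theta> (nabla v b)) = \<theta> (nabla v w)"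
    using linear_expand_V[OF linear_compose[OF linear_nabla_right linear_theta] w, of v]
    by (simp add: o_def)
  finally show ?thesis unfolding trace by simp
qed

lemma sum_g_nabla_br_frame_dual:
  "(\<Sum>b\<in>B. g (nabla (br b v) w) (f b)) = (\<Sum>b\<in>B. g (br (f b) (br b v)) w) - \<theta> (br w v) / 2"
proof -
  have e: "g (nabla (br b v) w) (f b) = g (br (f b) (br b v)) w
      - \<theta> (br b v) * g w (f b) / 2 + \<theta> w * g (br b v) (f b) / 2" if b: "b \<in> B" for b
    using koszul_VVH[OF subalgebra_V[OF frame_V[OF b] v] w f_H[OF b]] by simp
  have "(\<Sum>b\<in>B. g (nabla (br b v) w) (f b)) = (\<Sum>b\<in>B. g (br (f b) (br b v)) w)
      - (\<Sum>b\<in>B. g w (f b) * \<theta> (br b v)) / 2 + \<theta> w * (\<Sum>b\<in>B. g (br b v) (f b)) / 2"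
    by (simp add: e sum.distrib sum_subtractf sum_divide_distrib sum_distrib_left algebra_simps)
  also have "(\<Sum>b\<in>B. g w (f b) * \<theta> (br b v)) = \<theta> (br w v)"
    using linear_expand_V[OF linear_compose[OF linear_br_left linear_theta] w, of v]
    by (simp add: o_def)
  finally show ?thesis unfolding sum_g_br_frame_V_dual[OF v] by simp
qed

lemma sum_g_nabla_br_dual_frame: "(\<Sum>b\<in>B. g (nabla (br (f b) v) w) b) = - g w (br \<zeta> v) / 2"
proof -
  have e: "g (nabla (br (f b) v) w) b = \<theta> w * g (br (f b) v) b / 2 - g w (br (f b) v) * \<theta> b / 2"
    if b: "b \<in> B" for b
    using koszul_XVV[OF w frame_V[OF b]] by simp
  have "(\<Sum>b\<in>B. g (nabla (br (f b) v) w) b)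
      = \<theta> w * (\<Sum>b\<in>B. g (br (f b) v) b) / 2 - (\<Sum>b\<in>B. g w (br (f b) v) * \<theta> b) / 2"
    by (simp add: e sum_subtractf sum_divide_distrib sum_distrib_left)
  also have "(\<Sum>b\<in>B. g w (br (f b) v) * \<theta> b) = g w (br \<zeta> v)"
    unfolding \<zeta>_def by (simp add: br_sum_left g_sum_right br_simps g_simps mult.commute)
  finally show ?thesis unfolding sum_g_br_dual_V_frame[OF v] by simp
qed

lemma sum_g_br_dual_br_frame:
  "(\<Sum>b\<in>B. g (br (f b) (br b v)) w)
     = - (\<Sum>b\<in>B. \<Sum>c\<in>B. g (br (f b) v) c * g (br (f c) b) w) + g (br v \<xi>) w"
proof -
  have jacobi_frame: "br (f b) (br b v) = - br b (br v (f b)) + br v (br b (f b))" for b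
    using jacobi[of "f b" b v] br_antisym[of "f b" b] by (simp add: br_simps algebra_simps)
  have "g (br b (br v (f b))) w = (\<Sum>c\<in>B. g (br (f b) v) c * g (br (f c) b) w)" if b: "b \<in> B" for b
  proof -
    have "g (br b (br v (f b))) w = (\<Sum>c\<in>B. g (br v (f b)) (f c) * g (br b c) w)
        + (\<Sum>c\<in>B. g (br v (f b)) c * g (br b (f c)) w)"
      using arg_cong[OF expand[of "br v (f b)"], of "\<lambda>x. g (br b x) w"]
      by (simp add: br_sum_right g_sum_left br_simps g_simps)
    also have "(\<Sum>c\<in>B. g (br v (f b)) (f c) * g (br b c) w) = 0"
      using isotropic_V[OF subalgebra_V[OF frame_V[OF b] frame_V] w] by simp
    also have "(\<Sum>c\<in>B. g (br v (f b)) c * g (br b (f c)) w)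
        = (\<Sum>c\<in>B. g (br (f b) v) c * g (br (f c) b) w)"
      using br_antisym[of v "f b"] br_antisym[of b "f _"] by (simp add: g_simps)
    finally show ?thesis by simp
  qed
  moreover have "(\<Sum>b\<in>B. g (br (f b) (br b v)) w)
      = - (\<Sum>b\<in>B. g (br b (br v (f b))) w) + g (br v \<xi>) w"
    unfolding jacobi_frame \<xi>_def by (simp add: g_simps br_sum_right g_sum_left sum_subtractf)
  ultimately show ?thesis by simp
qed

text \<open>The double sums over the frame coming from sum_g_br_dual_nabla_frame and
  sum_g_br_dual_br_frame cancel.\<close>
lemma ricci_VV: "ricci br g v w = - g (br v \<xi>) w - \<theta> v * g \<xi> w / 2 + \<theta> (br w v) / 2"
proof -
  define u where "u = nabla v w"
  have "ricci br g v w = - (\<Sum>b\<in>B. g u (nabla b (f b)) + g u (nabla (f b) b))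
      + (\<Sum>b\<in>B. g (nabla b w) (nabla v (f b))) + (\<Sum>b\<in>B. g (nabla (f b) w) (nabla v b))
      - (\<Sum>b\<in>B. g (nabla (br b v) w) (f b)) - (\<Sum>b\<in>B. g (nabla (br (f b) v) w) b)"
    unfolding ricci_dual_frame g_curvature u_def
    by (simp add: sum.distrib sum_subtractf sum_negf algebra_simps)
  also have "\<dots> = - g (br v \<xi>) w - \<theta> v * g \<xi> w / 2 + \<theta> (br w v) / 2"
    unfolding sum_g_nabla_frame_pairs sum_g_nabla_frame_nabla_dual sum_g_nabla_frame_dual[OF w]
      sum_g_br_dual_nabla_frame sum_g_nabla_dual_nabla_frame sum_g_nabla_br_frame_dual
      sum_g_nabla_br_dual_frame sum_g_br_dual_br_frame theta_nabla_VV
    using g_sym[of w "br \<zeta> v"] by (simp add: algebra_simps)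
  finally show ?thesis .
qed

end

lemma g_xi_V:
  assumes x: "x \<in> V"
  shows "g \<xi> x = (m - 1) * \<theta> x"
proof -
  have "(\<Sum>b\<in>B. - g (br x b) (f b) - g (br x (f b)) b + g (br b (f b)) x)
      = (\<Sum>b\<in>B. \<theta> x * g b (f b) - \<theta> b * g x (f b))"
    using dF_VVH[OF x frame_V f_H] by simp
  then have "- (\<Sum>b\<in>B. g (br x b) (f b)) - (\<Sum>b\<in>B. g (br x (f b)) b) + g \<xi> x
      = \<theta> x * (\<Sum>b\<in>B. g b (f b)) - (\<Sum>b\<in>B. g x (f b) * \<theta> b)"
    unfolding \<xi>_def
    by (simp add: sum.distrib sum_subtractf sum_negf sum_distrib_left g_sum_left mult.commute)
  then show ?thesis
    using trace_ad_V[OF x] trace_ad_V_dual[OF x] sum_g_frame_dual linear_expand_V[OF linear_theta x]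
    by (simp add: algebra_simps)
qed

lemma projH_xi: "projH \<xi> = (m - 1) *\<^sub>R \<zeta>"
  unfolding projH_def \<zeta>_def using g_xi_V[OF frame_V] by (simp add: scaleR_sum_right)

lemma g_br_xi:
  assumes v: "v \<in> V" and w: "w \<in> V"
  shows "g (br v \<xi>) w = (m - 1) * g (br v \<zeta>) w"
proof -
  have "g (br v \<xi>) w = g (br v (projV \<xi>)) w + g (br v (projH \<xi>)) w"
    using arg_cong[OF expand[of \<xi>], of "\<lambda>x. g (br v x) w"]
    by (simp add: projV_def projH_def br_simps g_simps)
  also have "g (br v (projV \<xi>)) w = 0" using isotropic_V[OF subalgebra_V[OF v projV_V] w] .
  finally show ?thesis unfolding projH_xi by (simp add: br_simps g_simps)
qed

lemma theta_br_VV: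
  assumes v: "v \<in> V" and w: "w \<in> V"
  shows "g (br w \<zeta>) v - g (br v \<zeta>) w = \<theta> (br v w)"
  using dF_VVH[OF v w zeta_H] g_V_zeta[OF v] g_V_zeta[OF w] g_V_zeta[OF subalgebra_V[OF v w]]
  by simp

lemma V_abelian_if_dim_2:
  assumes dim: "card B = 2" and v: "v \<in> V" and w: "w \<in> V"
  shows "br v w = 0"
proof -
  have frame: "br b d = 0" if b: "b \<in> B" and d: "d \<in> B" for b d
  proof (cases "b = d")
    case True then show ?thesis using br_self by simp
  next
    case False
    then have "{b, d} \<subseteq> B" "card {b, d} = 2" using b d by auto
    then have "B = {b, d}" using dim finite_B by (metis card_subset_eq)
    then have "br b d = g (br b d) (f b) *\<^sub>R b + g (br b d) (f d) *\<^sub>R d"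
      using expand_V[OF subalgebra_V[OF frame_V[OF b] frame_V[OF d]]] False by simp
    then show ?thesis by (rule br_in_span_imp_zero)
  qed
  have "br v w = br (\<Sum>b\<in>B. g v (f b) *\<^sub>R b) (\<Sum>d\<in>B. g w (f d) *\<^sub>R d)"
    using expand_V[OF v] expand_V[OF w] by simp
  then show ?thesis by (simp add: br_sum_left br_sum_right br_simps frame)
qed

context
  assumes einstein: "einstein br g"
begin

lemma ricci_VV_vanishes:
  assumes v: "v \<in> V" and w: "w \<in> V"
  shows "(m - 1) * g (br v \<zeta>) w + (m - 1) * \<theta> v * \<theta> w / 2 - \<theta> (br w v) / 2 = 0"
proof -
  have "ricci br g v w = 0" using einstein isotropic_V[OF v w] unfolding einstein_def by auto
  then show ?thesis
    unfolding ricci_VV[OF v w] g_br_xi[OF v w] g_xi_V[OF w] by (simp add: algebra_simps)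
qed

lemma dim_minus_2_theta_br:
  assumes v: "v \<in> V" and w: "w \<in> V"
  shows "(m - 2) * \<theta> (br v w) = 0"
proof -
  have "\<theta> (br w v) = - \<theta> (br v w)" using br_antisym[of w v] by (simp add: theta_simps)
  then have "m * \<theta> (br v w) - 2 * \<theta> (br v w) = 0"
    using ricci_VV_vanishes[OF v w] ricci_VV_vanishes[OF w v] theta_br_VV[OF v w]
    by (simp only: algebra_simps)
  then show ?thesis by (simp add: algebra_simps)
qed

text \<open>With \<theta> vanishing on [V, V], the Einstein condition says that \<zeta> is an eigenvector
  of ad v modulo V with eigenvalue - \<theta> v / 2, which must vanish as ad v is nilpotent.\<close>
lemma theta_V_zero:
  assumes dim: "card B \<ge> 2" and v: "v \<in> V"
  shows "\<theta> v = 0"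
proof -
  have theta_br: "\<theta> (br v' w) = 0" if v': "v' \<in> V" and w: "w \<in> V" for v' w
  proof (cases "card B = 2")
    case True then show ?thesis using V_abelian_if_dim_2[OF True v' w] theta_simps by simp
  next
    case False
    then have "m - 2 \<noteq> 0" using dim by simp
    then show ?thesis using dim_minus_2_theta_br[OF v' w] by simp
  qed
  have "g (br v \<zeta> - (- (\<theta> v / 2)) *\<^sub>R \<zeta>) w = 0" if w: "w \<in> V" for w
  proof -
    have "(m - 1) * (g (br v \<zeta>) w + \<theta> v * \<theta> w / 2) = 0"
      using ricci_VV_vanishes[OF v w] theta_br[OF w v] by (simp add: algebra_simps)
    moreover have "m - 1 \<noteq> 0" using dim by simp
    ultimately show ?thesis using g_zeta_V[OF w] by (simp add: g_simps)
  qed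
  then have "br v \<zeta> - (- (\<theta> v / 2)) *\<^sub>R \<zeta> \<in> V" by (rule mem_V_if_orthogonal_V)
  then have "- (\<theta> v / 2) = 0 \<or> \<zeta> = 0" by (rule ad_eigenvalue_mod_V[OF zeta_H v])
  then show ?thesis using g_zeta_V[OF v] by (auto simp: g_simps)
qed

end

context
  assumes theta_zero: "\<And>x. \<theta> x = 0"
begin

lemma xi_zero: "\<xi> = 0"
proof -
  have g_V: "g \<xi> x = 0" if "x \<in> V" for x using g_xi_V[OF that] theta_zero by simp
  have g_H: "g \<xi> y = 0" if y: "y \<in> H" for y
  proof -
    have "(\<Sum>b\<in>B. - g (br y (f b)) b - g (br y b) (f b) + g (br (f b) b) y) = 0"
      using dF_HHV[OF y f_H frame_V] theta_zero by simp
    moreover have "(\<Sum>b\<in>B. g (br (f b) b) y) = - g \<xi> y"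
      unfolding \<xi>_def using br_antisym[of "f _" "_"] by (simp add: g_sum_left g_simps sum_negf)
    ultimately show ?thesis
      using trace_ad_H[OF y] trace_ad_H_dual[OF y] by (simp add: sum.distrib sum_subtractf sum_negf)
  qed
  have "g \<xi> z = 0" for z
  proof -
    obtain v h where "v \<in> V" "h \<in> H" "z = v + h" by (rule decompose)
    then show ?thesis using g_V g_H by (simp add: g_simps)
  qed
  then show ?thesis by (rule g_nondegenerate)
qed

text \<open>The trace of the commutator of nabla X and nabla Y on the invariant subspace V vanishes.\<close>
lemma sum_g_nabla_nabla_frame_comm:
  "(\<Sum>b\<in>B. g (nabla X (nabla Y b)) (f b)) = (\<Sum>b\<in>B. g (nabla Y (nabla X b)) (f b))"
proof -
  have expand_XY: "g (nabla X (nabla Y b)) (f b) = (\<Sum>c\<in>B. g (nabla Y b) (f c) * g (nabla X c) (f b))"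
    if b: "b \<in> B" for X Y b
  proof -
    have "g (nabla X (nabla Y b)) (f b) = - g (nabla Y b) (nabla X (f b))"
      using nabla_metric[of X "nabla Y b" "f b"] by simp
    also have "\<dots> = - (\<Sum>c\<in>B. g (nabla Y b) (f c) * g c (nabla X (f b)))"
      using g_expand_V_left[OF nabla_preserves_V[OF theta_zero frame_V[OF b], of Y], of "nabla X (f b)"]
      by simp
    also have "\<dots> = (\<Sum>c\<in>B. g (nabla Y b) (f c) * g (nabla X c) (f b))"
    proof -
      have "g c (nabla X (f b)) = - g (nabla X c) (f b)" for c using nabla_metric[of X c "f b"] by simp
      then show ?thesis by (simp add: sum_negf[symmetric])
    qed
    finally show ?thesis .
  qed
  have "(\<Sum>b\<in>B. g (nabla X (nabla Y b)) (f b))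
      = (\<Sum>b\<in>B. \<Sum>c\<in>B. g (nabla Y b) (f c) * g (nabla X c) (f b))"
    by (rule sum.cong) (simp_all add: expand_XY)
  also have "\<dots> = (\<Sum>c\<in>B. \<Sum>b\<in>B. g (nabla Y b) (f c) * g (nabla X c) (f b))" by (rule sum.swap)
  also have "\<dots> = (\<Sum>b\<in>B. g (nabla Y (nabla X b)) (f b))"
    by (rule sum.cong) (simp_all add: expand_XY mult.commute)
  finally show ?thesis .
qed

lemma ricci_VH:
  assumes v: "v \<in> V" and h: "h \<in> H"
  shows "ricci br g v h = - (\<Sum>b\<in>B. g (nabla (br v h) b) (f b))"
proof -
  have "g (Rm b v h) (f b) = 0" if b: "b \<in> B" for b
    using isotropic_H[OF curvature_preserves_H[OF theta_zero h] f_H[OF b]] .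
  moreover have "g (Rm (f b) v h) b = g (Rm v h b) (f b)" if b: "b \<in> B" for b
  proof -
    have "Rm (f b) v h = - Rm v h (f b) - Rm h (f b) v"
      using first_bianchi[of "f b" v h] by (simp add: algebra_simps eq_neg_iff_add_eq_0)
    then have "g (Rm (f b) v h) b = - g (Rm v h (f b)) b - g (Rm h (f b) v) b" by (simp add: g_simps)
    also have "g (Rm h (f b) v) b = 0"
      using isotropic_V[OF curvature_preserves_V[OF theta_zero v] frame_V[OF b]] .
    also have "- g (Rm v h (f b)) b = g (f b) (Rm v h b)" using curvature_skew[of v h "f b" b] by simp
    finally show ?thesis using g_sym[of "f b" "Rm v h b"] by simp
  qed
  ultimately have "ricci br g v h = (\<Sum>b\<in>B. g (Rm v h b) (f b))" unfolding ricci_dual_frame by simp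
  also have "\<dots> = (\<Sum>b\<in>B. g (nabla v (nabla h b)) (f b)) - (\<Sum>b\<in>B. g (nabla h (nabla v b)) (f b))
      - (\<Sum>b\<in>B. g (nabla (br v h) b) (f b))"
    unfolding curvature_def by (simp add: g_simps sum_subtractf)
  finally show ?thesis using sum_g_nabla_nabla_frame_comm by simp
qed

lemma einstein_constant_zero:
  assumes einstein_c: "\<And>Y Z. ricci br g Y Z = c * g Y Z" and dim: "card B \<ge> 1"
  shows "c = 0"
proof -
  have "c * m = (\<Sum>a\<in>B. ricci br g a (f a))"
    unfolding einstein_c sum_distrib_left[symmetric] sum_g_frame_dual ..
  also have "\<dots> = - (\<Sum>a\<in>B. \<Sum>b\<in>B. g (nabla (br a (f a)) b) (f b))"
    using ricci_VH[OF frame_V f_H] by (simp add: sum_negf)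
  also have "\<dots> = - (\<Sum>b\<in>B. g (nabla \<xi> b) (f b))"
    unfolding \<xi>_def nabla_sum_left g_sum_left by (subst sum.swap) (rule refl)
  also have "\<dots> = 0" unfolding xi_zero by (simp add: nabla_simps g_simps)
  finally show ?thesis using dim by simp
qed

end

lemma abelian_if_dim_1: "card B = 1 \<Longrightarrow> br x y = 0"
proof -
  assume c1: "card B = 1"
  then obtain b where Bb: "B = {b}" by (rule card_1_singletonE)
  have ex: "z = g z (f b) *\<^sub>R b + g z b *\<^sub>R f b" for z using expand[of z] by (simp add: Bb)
  have bf: "br b (f b) = 0"
    using ex[of "br b (f b)"] br_in_span_imp_zero by metis
  have fb: "br (f b) b = 0" using bf br_antisym[of "f b" b] by simp
  have "br x y = br (g x (f b) *\<^sub>R b + g x b *\<^sub>R f b) (g y (f b) *\<^sub>R b + g y b *\<^sub>R f b)"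
    using ex[of x] ex[of y] by simp
  also have "\<dots> = 0" by (simp add: br_simps br_self bf fb)
  finally show ?thesis .
qed

end

context W4_W8_alg
begin

lemma dim_V_pos: "dim V \<ge> 1"
proof (rule ccontr)
  assume "\<not> dim V \<ge> 1"
  then have "V \<subseteq> {0}" using dim_eq_0 by (metis less_one not_le)
  then have "H = UNIV" using V_plus_H by fastforce
  then show False using \<open>\<not> dim V \<ge> 1\<close> dim_V_eq_dim_H by simp
qed

lemma parakahler_if_abelian:
  assumes "\<And>x y. br x y = 0"
  shows "parakahler br V H g"
proof -
  have "paraK V H 0 = 0"
    using paraK_V_plus_H[of 0 0] subspace_0[OF subspace_V] subspace_0[OF subspace_H] by simp
  then show ?thesis
    unfolding parakahler_def nabla_F_def fundamental_form_def nabla_abelian[OF assms]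
    by (simp add: g_simps)
qed

end

context nilpotent_W4_W8_alg
begin

lemma swap_nilpotent: "nilpotent_W4_W8_alg br g H V \<theta>"
  using swap nilpotent_lie_alg_axioms by (simp add: nilpotent_W4_W8_alg_def)

lemma nilpotent_dual_frame_exists: obtains B f where "nilpotent_dual_frame br g V H \<theta> B f"
  using dual_frame_exists nilpotent_W4_W8_alg_axioms by (metis nilpotent_dual_frame_def)

lemma abelian_if_dim_V_1: "dim V = 1 \<Longrightarrow> br x y = 0"
proof -
  assume "dim V = 1"
  obtain B f where "nilpotent_dual_frame br g V H \<theta> B f" by (rule nilpotent_dual_frame_exists)
  then interpret nilpotent_dual_frame br g V H \<theta> B f .
  show ?thesis using abelian_if_dim_1 card_B \<open>dim V = 1\<close> by simp
qed

lemma theta_zero_if_einstein: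
  assumes einstein: "einstein br g" and dim: "dim V \<ge> 2"
  shows "\<theta> x = 0"
proof -
  have "\<theta> v = 0" if "v \<in> V" for v
  proof -
    obtain B f where "nilpotent_dual_frame br g V H \<theta> B f" by (rule nilpotent_dual_frame_exists)
    then interpret nilpotent_dual_frame br g V H \<theta> B f .
    show ?thesis using theta_V_zero[OF einstein] card_B dim that by simp
  qed
  moreover have "\<theta> h = 0" if "h \<in> H" for h
  proof -
    interpret swapped: nilpotent_W4_W8_alg br g H V \<theta> by (rule swap_nilpotent)
    obtain B f where "nilpotent_dual_frame br g H V \<theta> B f"
      by (rule swapped.nilpotent_dual_frame_exists)
    then interpret nilpotent_dual_frame br g H V \<theta> B f .
    show ?thesis using theta_V_zero[OF einstein] card_B dim dim_V_eq_dim_H that by simp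
  qed
  ultimately show ?thesis using V_plus_H[of x] theta_simps by auto
qed

lemma ricci_zero_if_theta_zero:
  assumes theta_zero: "\<And>x. \<theta> x = 0" and einstein: "einstein br g"
  shows "ricci br g Y Z = 0"
proof -
  obtain c where c: "\<And>Y Z. ricci br g Y Z = c * g Y Z"
    using einstein unfolding einstein_def by blast
  obtain B f where "nilpotent_dual_frame br g V H \<theta> B f" by (rule nilpotent_dual_frame_exists)
  then interpret nilpotent_dual_frame br g V H \<theta> B f .
  have "c = 0" using einstein_constant_zero[OF theta_zero c] card_B dim_V_pos by simp
  then show ?thesis using c by simp
qed

end

lemma nilpotent_W4_W8_algI:
  assumes nilpotent: "nilpotent_lie_algebra br" and aph: "almost_parahermitian V H g"
    and W4_W8: "torsion_W4_W8 br V H g"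
  obtains \<theta> where "nilpotent_W4_W8_alg br g V H \<theta>"
proof -
  obtain \<theta> where subalgebras: "paraK_integrable br V H" and "linear \<theta>"
    and dF: "\<And>X Y Z. d2 br (fundamental_form V H g) X Y Z
                = wedge12 \<theta> (fundamental_form V H g) X Y Z"
    using W4_W8 unfolding torsion_W4_W8_def by blast
  note F_V = fundamental_form_V_aph[OF aph] and F_H = fundamental_form_H_aph[OF aph]
  have "- g (br v w) h - g (br v h) w + g (br w h) v = \<theta> v * g w h - \<theta> w * g v h"
    if "v \<in> V" "w \<in> V" "h \<in> H" for v w h
    using dF[of v w h] F_V[OF that(1)] F_V[OF that(2)] F_H[OF that(3)]
      isotropic_V_aph[OF aph that(1,2)]
    unfolding d2_def wedge12_def by simp
  moreover have "- g (br v w) h - g (br v h) w + g (br w h) v = \<theta> v * g w h - \<theta> w * g v h"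
    if "v \<in> H" "w \<in> H" "h \<in> V" for v w h
    using dF[of v w h] F_V[OF that(3)] F_H[OF that(1)] F_H[OF that(2)]
      isotropic_H_aph[OF aph that(1,2)]
    unfolding d2_def wedge12_def by simp
  ultimately have "nilpotent_W4_W8_alg br g V H \<theta>"
    using nilpotent aph subalgebras \<open>linear \<theta>\<close> isotropic_V_aph[OF aph] isotropic_H_aph[OF aph]
    unfolding nilpotent_W4_W8_alg_def W4_W8_alg_def W4_W8_alg_axioms_def metric_lie_alg_def
      metric_lie_alg_axioms_def nilpotent_lie_alg_def nilpotent_lie_alg_axioms_def lie_alg_def
      nilpotent_lie_algebra_def almost_parahermitian_def paraK_integrable_def
    by blast
  then show thesis by (rule that)
qed

theorem proposition8p3:
  fixes br :: "'a::euclidean_space \<Rightarrow> 'a \<Rightarrow> 'a"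
    and V H :: "'a set"
    and g :: "'a \<Rightarrow> 'a \<Rightarrow> real"
  assumes "nilpotent_lie_algebra br"
    and "almost_parahermitian V H g"
    and "torsion_W4_W8 br V H g"
    and "einstein br g"
  shows "parakahler br V H g \<and> (\<forall>Y Z. ricci br g Y Z = 0)"
proof -
  obtain \<theta> where "nilpotent_W4_W8_alg br g V H \<theta>"
    using assms(1-3) by (rule nilpotent_W4_W8_algI)
  then interpret nilpotent_W4_W8_alg br g V H \<theta> .
  consider "dim V = 1" | "dim V \<ge> 2" using dim_V_pos by linarith
  then show ?thesis
  proof cases
    case 1
    then have "br x y = 0" for x y by (rule abelian_if_dim_V_1)
    then show ?thesis using parakahler_if_abelian ricci_abelian by blast
  next
    case 2
    then have "\<theta> x = 0" for x using theta_zero_if_einstein[OF assms(4)] by blast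
    then show ?thesis using parakahler_if_theta_zero ricci_zero_if_theta_zero assms(4) by blast
  qed
qed

end
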